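(* Let $(X,d_X)$ be a discrete countable metric space, $Y=X\times\mathbb N$, and let $d_0$ be the metric on $X\times\overline{\mathbb N}$ given by $d_0(x_n,y_m)=d_X(x,y)+1$ for $n\ne m$ and $d_0(x_n,y_n)=d_X(x,y)$. Under the identification $T\leftrightarrow (T_n)_{n\in\mathbb N}$: (i) if $X$ is bounded, then $M_{X\times\mathbb N,d_0}=\ell_2(\mathbb B(H_X))'=\ell_2(C^*_u(X))'$; (ii) if $X$ is unbounded, then there exists $T\in M_{X\times\mathbb N,d_0}$ with $T\notin\ell_2(C^*_u(X))''$.
   Context: $\overline{\mathbb N}=\mathbb N\cup\{0\}$; $x_n=(x,n)$, $X_n=X\times\{n\}$, $X_0$ identified with $X$. $H_Z=\ell^2(Z)$. $C^*_u(X)$ is the norm closure in $\mathbb B(H_X)$ of bounded finite-propagation operators (propagation at most $L$: $(\delta_x,T\delta_y)=0$ whenever $d_X(x,y)\ge L$). For a metric $d$ on $X\sqcup Y$ extending $d_X$, $M_{Y,d}$ is the norm closure in $\mathbb B(H_X,H_Y)$ of bounded operators $T:H_X\to H_Y$ of finite propagation (there is $L$ with $(\delta_y,T\delta_x)=0$ whenever $d(x,y)\ge L$). $H_{X\times\mathbb N}=\bigoplus_{n\ge1}H_{X_n}$, $T_n=Q_nT$ where $Q_n$ projects onto $H_{X_n}$, and $T_n$ is regarded as an operator on $H_X$ via $\delta_{x_n}\leftrightarrow\delta_x$. For a $C^*$-algebra $A$: $\ell_2(A)$ is the Hilbert $A$-module of sequences $(a_n)$ with $\sum a_n^*a_n$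 norm convergent; its dual $\ell_2(A)'$ (bounded $A$-linear maps $\ell_2(A)\to A$) is identified with the module of sequences $(a_n)$ in $A$ whose partial sums $\sum_{n=1}^m a_n^*a_n$ are uniformly bounded in norm, acting by $(b_n)\mapsto\sum a_n^*b_n$; the bidual $\ell_2(A)''$ (bounded $A$-linear maps $\ell_2(A)'\to A$) is a Hilbert $A$-module with canonical embeddings $\ell_2(A)\subset\ell_2(A)''\subset\ell_2(A)'$, the second given by restricting a functional on $\ell_2(A)'$ to $\ell_2(A)$. Every element of $M_{X\times\mathbb N,d_0}$ is a sequence in $\ell_2(C^*_u(X))'$. *)

theory Defs
  imports "HOL-Analysis.Analysis"
begin

text \<open>Concrete model: an operator T : H_A -> H_B (H_Z = l^2(Z)) is represented by its
matrix (kernel) k :: 'b => 'a => complex, k y x = (delta_y, T delta_x).\<close>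

type_synonym ('b, 'a) kernel = "'b \<Rightarrow> 'a \<Rightarrow> complex"

definition fin_supp :: "('a \<Rightarrow> complex) \<Rightarrow> bool" where
  "fin_supp f \<longleftrightarrow> finite {x. f x \<noteq> 0}"

definition l2norm :: "('a \<Rightarrow> complex) \<Rightarrow> real" where
  "l2norm f = sqrt (infsum (\<lambda>x. (cmod (f x))^2) UNIV)"

definition kapply :: "('b, 'a) kernel \<Rightarrow> ('a \<Rightarrow> complex) \<Rightarrow> 'b \<Rightarrow> complex" where
  "kapply k f y = (\<Sum>x\<in>{x. f x \<noteq> 0}. k y x * f x)"

definition bounded_kernel :: "('b, 'a) kernel \<Rightarrow> bool" where
  "bounded_kernel k \<longleftrightarrow> (\<exists>C. \<forall>f. fin_supp f \<longrightarrow>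
      (\<lambda>y. (cmod (kapply k f y))^2) summable_on UNIV \<and> l2norm (kapply k f) \<le> C * l2norm f)"

definition knorm :: "('b, 'a) kernel \<Rightarrow> real" where
  "knorm k = (SUP f\<in>{f. fin_supp f \<and> l2norm f \<le> 1}. l2norm (kapply k f))"

definition kdiff :: "('b, 'a) kernel \<Rightarrow> ('b, 'a) kernel \<Rightarrow> ('b, 'a) kernel" where
  "kdiff k s = (\<lambda>y x. k y x - s y x)"

definition kadj :: "('b, 'a) kernel \<Rightarrow> ('a, 'b) kernel" where
  "kadj k = (\<lambda>x y. cnj (k y x))"

definition kmult :: "('c, 'b) kernel \<Rightarrow> ('b, 'a) kernel \<Rightarrow> ('c, 'a) kernel" where
  "kmult k s = (\<lambda>z x. infsum (\<lambda>y. k z y * s y x) UNIV)"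

definition bounded_ops :: "('a, 'a) kernel set" where
  "bounded_ops = {k. bounded_kernel k}"

definition finite_prop :: "('a::metric_space, 'a) kernel \<Rightarrow> bool" where
  "finite_prop s \<longleftrightarrow> (\<exists>L. \<forall>x y. dist x y \<ge> L \<longrightarrow> s x y = 0)"

definition uniform_roe :: "('a::metric_space, 'a) kernel set" where
  "uniform_roe = {k. bounded_kernel k \<and>
     (\<forall>e>0. \<exists>s. bounded_kernel s \<and> finite_prop s \<and> knorm (kdiff k s) < e)}"

text \<open>The metric d_0 on X x Nbar (level 0 is X itself).\<close>
definition d0 :: "'a::metric_space \<times> nat \<Rightarrow> 'a \<times> nat \<Rightarrow> real" where
  "d0 p q = (if snd p = snd q then dist (fst p) (fst q) else dist (fst p) (fst q) + 1)"

text \<open>Operators H_X -> H_{X x N}, N = {1,2,...}: the index (y,n) of the kernel stands for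
the point y_{n+1} of X_{n+1}.\<close>
definition finite_prop_M :: "('a::metric_space \<times> nat, 'a) kernel \<Rightarrow> bool" where
  "finite_prop_M s \<longleftrightarrow> (\<exists>L. \<forall>x y n. d0 (x, 0) (y, Suc n) \<ge> L \<longrightarrow> s (y, n) x = 0)"

definition M_XN :: "('a::metric_space \<times> nat, 'a) kernel set" where
  "M_XN = {k. bounded_kernel k \<and>
     (\<forall>e>0. \<exists>s. bounded_kernel s \<and> finite_prop_M s \<and> knorm (kdiff k s) < e)}"

text \<open>T |-> (T_n): component n of the result is T_{n+1}.\<close>
definition Tseq :: "('a \<times> nat, 'a) kernel \<Rightarrow> nat \<Rightarrow> ('a, 'a) kernel" where
  "Tseq k = (\<lambda>n y x. k (y, n) x)"

definition psum :: "(nat \<Rightarrow> ('a, 'a) kernel) \<Rightarrow> (nat \<Rightarrow> ('a, 'a) kernel) \<Rightarrow> nat \<Rightarrow> ('a, 'a) kernel" where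
  "psum a b m = (\<lambda>x y. \<Sum>n<m. kmult (kadj (a n)) (b n) x y)"

definition pair_conv :: "(nat \<Rightarrow> ('a, 'a) kernel) \<Rightarrow> (nat \<Rightarrow> ('a, 'a) kernel) \<Rightarrow> ('a, 'a) kernel \<Rightarrow> bool" where
  "pair_conv a b S \<longleftrightarrow> bounded_kernel S \<and> (\<lambda>m. knorm (kdiff (psum a b m) S)) \<longlonglongrightarrow> 0"

definition ell2_mod :: "('a, 'a) kernel set \<Rightarrow> (nat \<Rightarrow> ('a, 'a) kernel) set" where
  "ell2_mod A = {a. (\<forall>n. a n \<in> A) \<and> (\<exists>S. pair_conv a a S)}"

definition ell2_dual :: "('a, 'a) kernel set \<Rightarrow> (nat \<Rightarrow> ('a, 'a) kernel) set" where
  "ell2_dual A = {a. (\<forall>n. a n \<in> A) \<and> (\<exists>C. \<forall>m. knorm (psum a a m) \<le> C)}"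

definition dual_norm :: "(nat \<Rightarrow> ('a, 'a) kernel) \<Rightarrow> real" where
  "dual_norm b = sqrt (SUP m. knorm (psum b b m))"

text \<open>l_2(A)'' viewed inside l_2(A)': those a in l_2(A)' whose functional on l_2(A) is the
restriction of a bounded A-linear map phi : l_2(A)' -> A.\<close>
definition ell2_bidual :: "('a, 'a) kernel set \<Rightarrow> (nat \<Rightarrow> ('a, 'a) kernel) set" where
  "ell2_bidual A = {a \<in> ell2_dual A. \<exists>\<phi>.
     (\<forall>b\<in>ell2_dual A. \<phi> b \<in> A) \<and>
     (\<forall>b\<in>ell2_dual A. \<forall>c\<in>ell2_dual A. \<phi> (\<lambda>n x y. b n x y + c n x y) = (\<lambda>x y. \<phi> b x y + \<phi> c x y)) \<and>
     (\<forall>b\<in>ell2_dual A. \<forall>t\<in>A. \<phi> (\<lambda>n. kmult (b n) t) = kmult (\<phi> b) t) \<and>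
     (\<exists>C. \<forall>b\<in>ell2_dual A. knorm (\<phi> b) \<le> C * dual_norm b) \<and>
     (\<forall>b\<in>ell2_mod A. pair_conv a b (\<phi> b))}"

end

theory Submission
  imports Defs
begin

(* For finitely supported f the rows T_n of T : H_X -> H_{X x N} satisfy
   sum_n |T_n f|^2 = |T f|^2.  Testing sum_{n<m} T_n^* T_n against finitely supported vectors
   and applying Cauchy-Schwarz twice gives |sum_{n<m} T_n^* T_n| <= |T|^2; conversely, uniformly
   bounded partial sums sum_{n<m} a_n^* a_n let one stack the a_n into a bounded T.  If X is
   bounded, every kernel has finite propagation for d_0 and for d_X, so M_{X x N,d_0} consists of
   all bounded T and C*_u(X) = B(H_X); this is (i).

   If X is unbounded, choose injective sequences x_n, z_n with d(x_n, z_n) >= n and let T_n be the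
   matrix unit at (x_n, x_n); T has propagation 1 for d_0.  A bounded module map phi extending the
   functional of T, evaluated on the sequence of matrix units at (x_n, z_n), is forced to have entry
   1 at every (x_n, z_n), which no norm limit of finite-propagation kernels can have; this is (ii). *)

abbreviation sqmod :: "('a \<Rightarrow> complex) \<Rightarrow> 'a \<Rightarrow> real" where
  "sqmod u \<equiv> (\<lambda>x. (cmod (u x))^2)"

lemma infsum_UNIV_finite_support:
  assumes "finite S" "\<And>x. x \<notin> S \<Longrightarrow> f x = 0"
  shows "infsum f UNIV = sum f S"
proof -
  have "infsum f UNIV = infsum f S" by (rule infsum_cong_neutral) (use assms in auto)
  then show ?thesis using assms(1) by simp
qed

lemma nonneg_summable_infsum_le:
  fixes g :: "'a \<Rightarrow> real"
  assumes "\<And>x. g x \<ge> 0" "\<And>F. finite F \<Longrightarrow> sum g F \<le> B"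
  shows "g summable_on UNIV" "infsum g UNIV \<le> B"
proof -
  show g: "g summable_on UNIV"
    by (rule nonneg_bdd_above_summable_on) (auto simp: bdd_above_def intro!: exI[of _ B] assms)
  show "infsum g UNIV \<le> B" by (rule infsum_le_finite_sums[OF g]) (use assms in auto)
qed

lemma infsum_sum_finite:
  fixes f :: "'i \<Rightarrow> 'a \<Rightarrow> complex"
  assumes "finite I" "\<And>i. i \<in> I \<Longrightarrow> f i summable_on A"
  shows "(\<lambda>w. \<Sum>i\<in>I. f i w) summable_on A"
    and "infsum (\<lambda>w. \<Sum>i\<in>I. f i w) A = (\<Sum>i\<in>I. infsum (f i) A)"
  using assms by (induction I rule: finite_induct) (auto simp: summable_on_add infsum_add)

lemma infsum_of_real:
  assumes "g summable_on A"
  shows "infsum (\<lambda>x. complex_of_real (g x)) A = complex_of_real (infsum g A)"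
  by (rule infsumI, rule has_sum_of_real, rule has_sum_infsum[OF assms])

lemma cnj_mult_self: "cnj z * z = complex_of_real ((cmod z)^2)"
  by (metis complex_mult_cnj cmod_power2 mult.commute)

subsection \<open>Square-summable functions\<close>

lemma l2norm_nonneg: "l2norm f \<ge> 0"
  unfolding l2norm_def by (simp add: infsum_nonneg)

lemma l2norm_sq: "(l2norm u)^2 = infsum (sqmod u) UNIV"
  unfolding l2norm_def by (simp add: infsum_nonneg)

lemma fin_supp_zero[simp]: "fin_supp (\<lambda>_. 0)"
  unfolding fin_supp_def by simp

lemma fin_supp_summable: "fin_supp f \<Longrightarrow> sqmod f summable_on UNIV"
  unfolding fin_supp_def by (rule finite_nonzero_values_imp_summable_on) simp

lemma sqmod_le_infsum:
  assumes "sqmod u summable_on UNIV"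
  shows "(cmod (u x))^2 \<le> infsum (sqmod u) UNIV"
  using finite_sum_le_infsum[OF assms, of "{x}"] by simp

lemma L2_set_le_l2norm:
  assumes "sqmod u summable_on UNIV" "finite F"
  shows "L2_set (\<lambda>x. cmod (u x)) F \<le> l2norm u"
  unfolding L2_set_def l2norm_def
  by (rule real_sqrt_le_mono, rule finite_sum_le_infsum) (use assms in auto)

lemma l2norm_divide:
  assumes "c > 0"
  shows "l2norm (\<lambda>x. u x / complex_of_real c) = l2norm u / c"
proof -
  have scaled: "sqmod (\<lambda>x. u x / complex_of_real c) = (\<lambda>x. sqmod u x * (1 / c^2))"
    using assms by (auto simp: norm_divide power_divide)
  have "infsum (sqmod (\<lambda>x. u x / complex_of_real c)) UNIV = infsum (sqmod u) UNIV * (1 / c^2)"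
    unfolding scaled by (rule infsum_cmult_left')
  then show ?thesis using assms unfolding l2norm_def by (simp add: real_sqrt_divide)
qed

lemma cauchy_schwarz_infsum:
  assumes u: "sqmod u summable_on UNIV" and v: "sqmod v summable_on UNIV"
  shows "(\<lambda>x. cnj (u x) * v x) summable_on UNIV"
    and "cmod (infsum (\<lambda>x. cnj (u x) * v x) UNIV) \<le> l2norm u * l2norm v"
proof -
  have norm_eq: "(\<lambda>x. norm (cnj (u x) * v x)) = (\<lambda>x. cmod (u x) * cmod (v x))"
    by (simp add: norm_mult)
  have "(\<Sum>x\<in>F. cmod (u x) * cmod (v x)) \<le> l2norm u * l2norm v" if "finite F" for F
  proof -
    have "(\<Sum>x\<in>F. cmod (u x) * cmod (v x)) \<le> L2_set (\<lambda>x. cmod (u x)) F * L2_set (\<lambda>x. cmod (v x)) F"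
      using L2_set_mult_ineq[where f="\<lambda>x. cmod (u x)" and g="\<lambda>x. cmod (v x)" and A=F] by simp
    also have "\<dots> \<le> l2norm u * l2norm v"
      using that by (intro mult_mono L2_set_le_l2norm u v l2norm_nonneg) auto
    finally show ?thesis .
  qed
  then have abs: "(\<lambda>x. norm (cnj (u x) * v x)) summable_on UNIV"
    and bound: "infsum (\<lambda>x. norm (cnj (u x) * v x)) UNIV \<le> l2norm u * l2norm v"
    unfolding norm_eq by (auto intro!: nonneg_summable_infsum_le)
  show "(\<lambda>x. cnj (u x) * v x) summable_on UNIV" by (rule abs_summable_summable[OF abs])
  show "cmod (infsum (\<lambda>x. cnj (u x) * v x) UNIV) \<le> l2norm u * l2norm v"
    using norm_infsum_bound[OF abs] bound by linarith
qed

definition fin_inner :: "('a \<Rightarrow> complex) \<Rightarrow> ('a \<Rightarrow> complex) \<Rightarrow> complex" where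
  "fin_inner h u = (\<Sum>x\<in>{x. h x \<noteq> 0}. cnj (h x) * u x)"

lemma fin_inner_infsum: "fin_supp h \<Longrightarrow> fin_inner h u = infsum (\<lambda>x. cnj (h x) * u x) UNIV"
  unfolding fin_inner_def fin_supp_def by (rule infsum_UNIV_finite_support[symmetric]) auto

lemma fin_inner_le:
  assumes "fin_supp h" "sqmod u summable_on UNIV"
  shows "cmod (fin_inner h u) \<le> l2norm h * l2norm u"
  unfolding fin_inner_infsum[OF assms(1)]
  by (rule cauchy_schwarz_infsum(2)[OF fin_supp_summable[OF assms(1)] assms(2)])

lemma fin_inner_sum: "fin_inner h (\<lambda>y. \<Sum>n\<in>N. u n y) = (\<Sum>n\<in>N. fin_inner h (u n))"
  unfolding fin_inner_def by (simp add: sum_distrib_left) (rule sum.swap)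

text \<open>Testing against \<open>u\<close> restricted to a finite set \<open>G\<close> gives
  \<open>\<Sum>\<^bsub>G\<^esub> |u|\<^sup>2 \<le> B (\<Sum>\<^bsub>G\<^esub> |u|\<^sup>2)\<^sup>1\<^sup>/\<^sup>2\<close>.\<close>
lemma l2norm_le_by_duality:
  assumes B: "B \<ge> 0"
    and H: "\<And>h. fin_supp h \<Longrightarrow> cmod (fin_inner h u) \<le> B * l2norm h"
  shows "sqmod u summable_on UNIV" "l2norm u \<le> B"
proof -
  have partial: "sum (sqmod u) G \<le> B^2" if G: "finite G" for G
  proof -
    define h where "h x = (if x \<in> G then u x else 0)" for x
    define S where "S = sum (sqmod u) G"
    have S0: "S \<ge> 0" unfolding S_def by (simp add: sum_nonneg)
    have supp: "{x. h x \<noteq> 0} \<subseteq> G" unfolding h_def by auto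
    then have fh: "fin_supp h" unfolding fin_supp_def using G finite_subset by blast
    have "fin_inner h u = (\<Sum>x\<in>G. cnj (h x) * u x)"
      unfolding fin_inner_def by (rule sum.mono_neutral_left[OF G supp]) auto
    also have "\<dots> = complex_of_real S"
      unfolding S_def of_real_sum by (rule sum.cong) (auto simp: h_def cnj_mult_self)
    finally have inner: "fin_inner h u = complex_of_real S" .
    have "infsum (sqmod h) UNIV = sum (sqmod h) G"
      by (rule infsum_UNIV_finite_support[OF G]) (auto simp: h_def)
    also have "\<dots> = S" unfolding S_def by (rule sum.cong) (auto simp: h_def)
    finally have "l2norm h = sqrt S" unfolding l2norm_def by simp
    then have sq: "sqrt S * sqrt S \<le> B * sqrt S" using H[OF fh] S0 by (simp add: inner)
    have "sqrt S \<le> B"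
    proof (cases "sqrt S = 0")
      case False
      then show ?thesis using mult_right_le_imp_le[OF sq] S0 by simp
    qed (use B in simp)
    then have "(sqrt S)^2 \<le> B^2" by (rule power_mono) (simp add: S0)
    then show ?thesis using S0 unfolding S_def by simp
  qed
  show su: "sqmod u summable_on UNIV" by (rule nonneg_summable_infsum_le(1)[OF _ partial]) auto
  have "infsum (sqmod u) UNIV \<le> B^2" by (rule nonneg_summable_infsum_le(2)[OF _ partial]) auto
  then show "l2norm u \<le> B" unfolding l2norm_def using B real_sqrt_le_mono by fastforce
qed

subsection \<open>Bounded kernels\<close>

lemma kapply_zero_vector[simp]: "kapply k (\<lambda>_. 0) = (\<lambda>_. 0)"
  unfolding kapply_def by simp

lemma bounded_kernelD:
  fixes k :: "('b,'a) kernel"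
  assumes "bounded_kernel k"
  obtains C where "C \<ge> 0" "\<And>f::'a \<Rightarrow> complex. fin_supp f \<Longrightarrow>
      sqmod (kapply k f) summable_on UNIV \<and> l2norm (kapply k f) \<le> C * l2norm f"
proof -
  obtain C where C: "\<And>f::'a \<Rightarrow> complex. fin_supp f \<Longrightarrow>
      sqmod (kapply k f) summable_on UNIV \<and> l2norm (kapply k f) \<le> C * l2norm f"
    using assms unfolding bounded_kernel_def by blast
  have "l2norm (kapply k f) \<le> max C 0 * l2norm f" if "fin_supp f" for f :: "'a \<Rightarrow> complex"
    using C[OF that] l2norm_nonneg[of f] by (meson max.cobounded1 mult_right_mono order_trans)
  then show ?thesis using that[of "max C 0"] C by simp
qed

lemma summable_sqmod_kapply:
  "bounded_kernel k \<Longrightarrow> fin_supp f \<Longrightarrow> sqmod (kapply k f) summable_on UNIV"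
  by (metis bounded_kernelD)

lemma knorm_least:
  assumes "\<And>f. fin_supp f \<Longrightarrow> l2norm f \<le> 1 \<Longrightarrow> l2norm (kapply k f) \<le> B"
  shows "knorm k \<le> B"
  unfolding knorm_def
proof (rule cSUP_least)
  have "(\<lambda>_. 0) \<in> {f. fin_supp f \<and> l2norm f \<le> 1}" by (simp add: l2norm_def)
  then show "{f. fin_supp f \<and> l2norm f \<le> 1} \<noteq> {}" by blast
qed (use assms in auto)

lemma knorm_upper:
  assumes "bounded_kernel k" "fin_supp f" "l2norm f \<le> 1"
  shows "l2norm (kapply k f) \<le> knorm k"
proof -
  obtain C where C: "C \<ge> 0" "\<And>f. fin_supp f \<Longrightarrow>
      sqmod (kapply k f) summable_on UNIV \<and> l2norm (kapply k f) \<le> C * l2norm f"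
    using bounded_kernelD[OF assms(1)] by blast
  have "l2norm (kapply k g) \<le> C" if "fin_supp g" "l2norm g \<le> 1" for g
    using C(2)[OF that(1)] mult_left_le[OF that(2) C(1)] by linarith
  then have "bdd_above ((\<lambda>f. l2norm (kapply k f)) ` {f. fin_supp f \<and> l2norm f \<le> 1})"
    by (auto simp: bdd_above_def)
  then show ?thesis unfolding knorm_def by (rule cSUP_upper[rotated]) (use assms in auto)
qed

lemma knorm_nonneg: "bounded_kernel k \<Longrightarrow> knorm k \<ge> 0"
  using knorm_upper[of k "\<lambda>_. 0"] by (simp add: l2norm_def)

lemma l2norm_kapply_le_knorm:
  assumes k: "bounded_kernel k" and f: "fin_supp f"
  shows "l2norm (kapply k f) \<le> knorm k * l2norm f"
proof (cases "l2norm f = 0")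
  case True
  then have "infsum (sqmod f) UNIV = 0" using l2norm_sq[of f] by simp
  then have "f = (\<lambda>_. 0)" using sqmod_le_infsum[OF fin_supp_summable[OF f]] by fastforce
  then show ?thesis using True by (simp add: l2norm_def)
next
  case False
  define c where "c = l2norm f"
  have c: "c > 0" using False l2norm_nonneg[of f] unfolding c_def by simp
  define g where "g x = f x / complex_of_real c" for x
  have supp: "{x. g x \<noteq> 0} = {x. f x \<noteq> 0}" unfolding g_def using c by auto
  have "fin_supp g" using f unfolding fin_supp_def supp .
  moreover have "l2norm g = 1" unfolding g_def l2norm_divide[OF c] using c c_def by simp
  ultimately have "l2norm (kapply k g) \<le> knorm k" by (intro knorm_upper[OF k]) auto
  moreover have "kapply k g = (\<lambda>y. kapply k f y / complex_of_real c)"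
    unfolding kapply_def supp unfolding g_def by (auto simp: sum_divide_distrib)
  ultimately have "l2norm (kapply k f) / c \<le> knorm k" by (simp add: l2norm_divide[OF c])
  then show ?thesis using c unfolding c_def by (simp add: divide_le_eq mult.commute)
qed

definition delta :: "'a \<Rightarrow> 'a \<Rightarrow> complex" where
  "delta x = (\<lambda>x'. if x' = x then 1 else 0)"

lemma fin_supp_delta: "fin_supp (delta x)"
  unfolding fin_supp_def delta_def by simp

lemma kapply_delta: "kapply k (delta x) = (\<lambda>y. k y x)"
proof -
  have "{x'. delta x x' \<noteq> 0} = {x}" by (auto simp: delta_def)
  then show ?thesis unfolding kapply_def by (auto simp: delta_def)
qed

lemma l2norm_delta: "l2norm (delta x) = 1"
proof -
  have "infsum (sqmod (delta x)) UNIV = sum (sqmod (delta x)) {x}"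
    by (rule infsum_UNIV_finite_support) (auto simp: delta_def)
  then show ?thesis unfolding l2norm_def by (simp add: delta_def)
qed

lemma column_summable: "bounded_kernel k \<Longrightarrow> sqmod (\<lambda>y. k y x) summable_on UNIV"
  using summable_sqmod_kapply[OF _ fin_supp_delta, of k x] by (simp add: kapply_delta)

lemma cmod_entry_le_knorm:
  assumes "bounded_kernel k"
  shows "cmod (k y x) \<le> knorm k"
proof -
  have "(cmod (k y x))^2 \<le> infsum (sqmod (\<lambda>y. k y x)) UNIV"
    by (rule sqmod_le_infsum[OF column_summable[OF assms]])
  then have "cmod (k y x) \<le> l2norm (kapply k (delta x))"
    unfolding l2norm_def kapply_delta using real_le_rsqrt by blast
  also have "\<dots> \<le> knorm k"
    by (rule knorm_upper[OF assms fin_supp_delta]) (simp add: l2norm_delta)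
  finally show ?thesis .
qed

lemma bounded_kernel_by_inner_bound:
  assumes C: "C \<ge> 0"
    and form: "\<And>f h. fin_supp f \<Longrightarrow> fin_supp h \<Longrightarrow>
      cmod (fin_inner h (kapply k f)) \<le> C * l2norm f * l2norm h"
  shows "bounded_kernel k" "knorm k \<le> C"
proof -
  have bound: "sqmod (kapply k f) summable_on UNIV \<and> l2norm (kapply k f) \<le> C * l2norm f"
    if "fin_supp f" for f
    using l2norm_le_by_duality[OF _ form[OF that]] C l2norm_nonneg[of f] by simp
  then show "bounded_kernel k" unfolding bounded_kernel_def by blast
  show "knorm k \<le> C"
    by (rule knorm_least) (use bound C in \<open>meson mult_left_le order_trans\<close>)
qed

lemma kapply_kdiff: "kapply (kdiff k s) f y = kapply k f y - kapply s f y"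
  unfolding kapply_def kdiff_def by (simp add: sum_subtractf left_diff_distrib)

lemma bounded_kdiff:
  fixes k s :: "('b, 'a) kernel"
  assumes k: "bounded_kernel k" and s: "bounded_kernel s"
  shows "bounded_kernel (kdiff k s)"
proof (rule bounded_kernel_by_inner_bound)
  show "knorm k + knorm s \<ge> 0" using knorm_nonneg[OF k] knorm_nonneg[OF s] by simp
  fix f :: "'a \<Rightarrow> complex" and h :: "'b \<Rightarrow> complex" assume f: "fin_supp f" and h: "fin_supp h"
  have "fin_inner h (kapply (kdiff k s) f) = fin_inner h (kapply k f) - fin_inner h (kapply s f)"
    unfolding fin_inner_def kapply_kdiff by (simp add: right_diff_distrib sum_subtractf)
  then have "cmod (fin_inner h (kapply (kdiff k s) f))
      \<le> cmod (fin_inner h (kapply k f)) + cmod (fin_inner h (kapply s f))"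
    by (simp add: norm_triangle_ineq4)
  also have "\<dots> \<le> l2norm h * (knorm k * l2norm f) + l2norm h * (knorm s * l2norm f)"
    using f h k s
    by (intro add_mono order_trans[OF fin_inner_le] mult_left_mono l2norm_kapply_le_knorm
        summable_sqmod_kapply l2norm_nonneg)
  finally show "cmod (fin_inner h (kapply (kdiff k s) f)) \<le> (knorm k + knorm s) * l2norm f * l2norm h"
    by (simp add: algebra_simps)
qed

lemma knorm_kdiff_self_le: "knorm (kdiff k k) \<le> 0"
  by (rule knorm_least) (simp add: kapply_kdiff l2norm_def)

lemma kmult_kadj: "kmult (kadj a) b x y = infsum (\<lambda>w. cnj (a w x) * b w y) UNIV"
  unfolding kmult_def kadj_def by simp

lemma fin_inner_kmult_kadj:
  fixes a b :: "('c, 'a) kernel"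
  assumes a: "bounded_kernel a" and b: "bounded_kernel b" and h: "fin_supp h" and f: "fin_supp f"
  shows "fin_inner h (kapply (kmult (kadj a) b) f) = infsum (\<lambda>w. cnj (kapply a h w) * kapply b f w) UNIV"
proof -
  let ?H = "{x. h x \<noteq> 0}" and ?F = "{y. f y \<noteq> 0}"
  have H: "finite ?H" and F: "finite ?F" using h f unfolding fin_supp_def by auto
  let ?g = "\<lambda>x y w. cnj (h x) * (cnj (a w x) * b w y) * f y"
  have g: "?g x y summable_on UNIV" for x y
    by (intro summable_on_cmult_left summable_on_cmult_right
        cauchy_schwarz_infsum(1) column_summable a b)
  have inner: "(\<lambda>w. \<Sum>y\<in>?F. ?g x y w) summable_on UNIV" for x
    by (rule infsum_sum_finite(1)[OF F g])
  have entry: "cnj (h x) * kmult (kadj a) b x y * f y = infsum (?g x y) UNIV" for x y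
    unfolding kmult_kadj infsum_cmult_left' infsum_cmult_right' ..
  have "fin_inner h (kapply (kmult (kadj a) b) f)
      = (\<Sum>x\<in>?H. \<Sum>y\<in>?F. cnj (h x) * kmult (kadj a) b x y * f y)"
    unfolding fin_inner_def kapply_def by (simp add: sum_distrib_left mult.assoc)
  also have "\<dots> = infsum (\<lambda>w. \<Sum>x\<in>?H. \<Sum>y\<in>?F. ?g x y w) UNIV"
    unfolding entry by (simp add: infsum_sum_finite(2)[OF F g] infsum_sum_finite(2)[OF H inner])
  also have "\<dots> = infsum (\<lambda>w. cnj (kapply a h w) * kapply b f w) UNIV"
  proof -
    have "cnj (kapply a h w) * kapply b f w = (\<Sum>x\<in>?H. \<Sum>y\<in>?F. ?g x y w)" for w
      unfolding kapply_def by (simp add: cnj_sum sum_product algebra_simps) (rule sum.swap)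
    then show ?thesis by simp
  qed
  finally show ?thesis .
qed

lemma kapply_psum: "kapply (psum a b m) f = (\<lambda>y. \<Sum>n<m. kapply (kmult (kadj (a n)) (b n)) f y)"
  unfolding kapply_def psum_def by (simp add: sum_distrib_right) (rule ext, rule sum.swap)

lemma fin_inner_psum:
  assumes "\<And>n. n < m \<Longrightarrow> bounded_kernel (a n)" "\<And>n. n < m \<Longrightarrow> bounded_kernel (b n)"
    and "fin_supp h" "fin_supp f"
  shows "fin_inner h (kapply (psum a b m) f)
      = (\<Sum>n<m. infsum (\<lambda>w. cnj (kapply (a n) h w) * kapply (b n) f w) UNIV)"
  unfolding kapply_psum fin_inner_sum using assms by (intro sum.cong refl fin_inner_kmult_kadj) auto

lemma psum_form_le:
  assumes a: "\<And>n. n < m \<Longrightarrow> bounded_kernel (a n)" and h: "fin_supp h" and f: "fin_supp f"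
  shows "cmod (fin_inner h (kapply (psum a a m) f))
      \<le> (\<Sum>n<m. l2norm (kapply (a n) h) * l2norm (kapply (a n) f))"
proof -
  have "cmod (fin_inner h (kapply (psum a a m) f))
      = cmod (\<Sum>n<m. infsum (\<lambda>w. cnj (kapply (a n) h w) * kapply (a n) f w) UNIV)"
    using fin_inner_psum[OF a a h f] by simp
  also have "\<dots> \<le> (\<Sum>n<m. cmod (infsum (\<lambda>w. cnj (kapply (a n) h w) * kapply (a n) f w) UNIV))"
    by (rule norm_sum)
  also have "\<dots> \<le> (\<Sum>n<m. l2norm (kapply (a n) h) * l2norm (kapply (a n) f))"
    using a h f by (intro sum_mono cauchy_schwarz_infsum(2) summable_sqmod_kapply) auto
  finally show ?thesis .
qed

lemma bounded_psum:
  assumes a: "\<And>n. n < m \<Longrightarrow> bounded_kernel (a n)"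
  shows "bounded_kernel (psum a a m)"
proof (rule bounded_kernel_by_inner_bound(1))
  show "(\<Sum>n<m. (knorm (a n))^2) \<ge> 0" by (simp add: sum_nonneg)
  fix f h :: "'a \<Rightarrow> complex" assume f: "fin_supp f" and h: "fin_supp h"
  have "cmod (fin_inner h (kapply (psum a a m) f))
      \<le> (\<Sum>n<m. l2norm (kapply (a n) h) * l2norm (kapply (a n) f))"
    by (rule psum_form_le[OF a h f])
  also have "\<dots> \<le> (\<Sum>n<m. (knorm (a n) * l2norm h) * (knorm (a n) * l2norm f))"
    using a h f
    by (intro sum_mono mult_mono l2norm_kapply_le_knorm l2norm_nonneg mult_nonneg_nonneg knorm_nonneg)
      auto
  also have "\<dots> = (\<Sum>n<m. (knorm (a n))^2) * l2norm f * l2norm h"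
    by (simp add: sum_distrib_left sum_distrib_right power2_eq_square mult_ac)
  finally show "cmod (fin_inner h (kapply (psum a a m) f)) \<le> \<dots>" .
qed

lemma pair_conv_eventually_eq:
  assumes "bounded_kernel S" "eventually (\<lambda>m. psum a b m = S) sequentially"
  shows "pair_conv a b S"
proof -
  have "eventually (\<lambda>m. knorm (kdiff (psum a b m) S) = 0) sequentially"
    using assms(2) knorm_kdiff_self_le knorm_nonneg[OF bounded_kdiff[OF assms(1,1)]]
    by (auto elim!: eventually_mono intro: order.antisym)
  then show ?thesis unfolding pair_conv_def using assms(1) by (simp add: tendsto_eventually)
qed

lemma pair_conv_unique:
  assumes conv: "pair_conv a b S" and S': "bounded_kernel S'"
    and ev: "eventually (\<lambda>m. psum a b m = S') sequentially"
  shows "S = S'"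
proof -
  have "(\<lambda>m. knorm (kdiff (psum a b m) S)) \<longlonglongrightarrow> 0" using conv unfolding pair_conv_def by blast
  moreover have "(\<lambda>m. knorm (kdiff (psum a b m) S)) \<longlonglongrightarrow> knorm (kdiff S' S)"
    using ev by (auto elim!: eventually_mono intro: tendsto_eventually)
  ultimately have "knorm (kdiff S' S) = 0" using LIMSEQ_unique by blast
  moreover have "bounded_kernel (kdiff S' S)"
    using S' conv unfolding pair_conv_def by (blast intro: bounded_kdiff)
  ultimately have "cmod (kdiff S' S y x) \<le> 0" for y x by (metis cmod_entry_le_knorm)
  then show ?thesis by (auto simp: kdiff_def intro!: ext)
qed

lemma psum_single:
  "psum a (\<lambda>n. if n = k then E else (\<lambda>_ _. 0)) m
    = (if k < m then kmult (kadj (a k)) E else (\<lambda>_ _. 0))"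
proof -
  have "kmult (kadj (a n)) (if n = k then E else (\<lambda>_ _. 0)) x y
      = (if n = k then kmult (kadj (a k)) E x y else 0)" for n x y
    by (simp add: kmult_def)
  then show ?thesis unfolding psum_def by (auto intro!: ext)
qed

subsection \<open>The row decomposition \<open>T \<mapsto> (T\<^sub>n)\<close>\<close>

lemma kapply_Tseq: "kapply (Tseq K n) f y = kapply K f (y, n)"
  unfolding kapply_def Tseq_def by simp

lemma infsum_slice:
  fixes g :: "'a \<times> nat \<Rightarrow> real"
  shows "infsum g (range (\<lambda>y. (y, n))) = infsum (\<lambda>y. g (y, n)) UNIV"
  by (subst infsum_reindex) (auto simp: inj_on_def comp_def)

lemma sum_infsum_slices_le:
  fixes g :: "'a \<times> nat \<Rightarrow> real"
  assumes g: "g summable_on UNIV" and g0: "\<And>p. g p \<ge> 0"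
  shows "(\<Sum>n<m. infsum (\<lambda>y. g (y, n)) UNIV) \<le> infsum g UNIV"
proof -
  have "(\<Sum>n<m. infsum (\<lambda>y. g (y, n)) UNIV) = infsum g (\<Union>n<m. range (\<lambda>y. (y, n)))"
    unfolding infsum_slice[symmetric] by (rule sum_infsum) (auto intro: summable_on_subset[OF g])
  also have "\<dots> \<le> infsum g UNIV"
    by (rule infsum_mono_neutral) (use g g0 in \<open>auto intro: summable_on_subset[OF g]\<close>)
  finally show ?thesis .
qed

lemma L2_set_l2norm_Tseq_le:
  assumes K: "bounded_kernel K" and f: "fin_supp f"
  shows "L2_set (\<lambda>n. l2norm (kapply (Tseq K n) f)) {..<m} \<le> l2norm (kapply K f)"
proof -
  have "(\<Sum>n<m. (l2norm (kapply (Tseq K n) f))^2)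
      = (\<Sum>n<m. infsum (\<lambda>y. sqmod (kapply K f) (y, n)) UNIV)"
    by (simp add: l2norm_sq kapply_Tseq)
  also have "\<dots> \<le> infsum (sqmod (kapply K f)) UNIV"
    by (rule sum_infsum_slices_le[OF summable_sqmod_kapply[OF K f]]) simp
  finally show ?thesis unfolding L2_set_def l2norm_def by (rule real_sqrt_le_mono)
qed

lemma Tseq_bounded:
  assumes K: "bounded_kernel K"
  shows "bounded_kernel (Tseq K n)"
  unfolding bounded_kernel_def
proof (intro exI[of _ "knorm K"] allI impI conjI)
  fix f :: "'a \<Rightarrow> complex" assume f: "fin_supp f"
  have "sqmod (kapply K f) summable_on range (\<lambda>y. (y, n))"
    by (rule summable_on_subset[OF summable_sqmod_kapply[OF K f]]) simp
  then show "sqmod (kapply (Tseq K n) f) summable_on UNIV"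
    by (subst (asm) summable_on_reindex) (auto simp: inj_on_def comp_def kapply_Tseq)
  have "l2norm (kapply (Tseq K n) f) \<le> L2_set (\<lambda>n. l2norm (kapply (Tseq K n) f)) {..<Suc n}"
    by (rule member_le_L2_set) auto
  also have "\<dots> \<le> l2norm (kapply K f)" by (rule L2_set_l2norm_Tseq_le[OF K f])
  also have "\<dots> \<le> knorm K * l2norm f" by (rule l2norm_kapply_le_knorm[OF K f])
  finally show "l2norm (kapply (Tseq K n) f) \<le> knorm K * l2norm f" .
qed

lemma knorm_psum_Tseq:
  assumes K: "bounded_kernel K"
  shows "knorm (psum (Tseq K) (Tseq K) m) \<le> (knorm K)^2"
proof (rule bounded_kernel_by_inner_bound(2))
  show "(knorm K)^2 \<ge> 0" by simp
  fix f h :: "'a \<Rightarrow> complex" assume f: "fin_supp f" and h: "fin_supp h"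
  let ?r = "\<lambda>g n. l2norm (kapply (Tseq K n) g)"
  have "cmod (fin_inner h (kapply (psum (Tseq K) (Tseq K) m) f)) \<le> (\<Sum>n<m. ?r h n * ?r f n)"
    by (rule psum_form_le[OF Tseq_bounded[OF K] h f])
  also have "\<dots> \<le> L2_set (?r h) {..<m} * L2_set (?r f) {..<m}"
    using L2_set_mult_ineq[where f="?r h" and g="?r f" and A="{..<m}"] by (simp add: l2norm_nonneg)
  also have "\<dots> \<le> l2norm (kapply K h) * l2norm (kapply K f)"
    by (intro mult_mono L2_set_l2norm_Tseq_le K f h l2norm_nonneg L2_set_nonneg)
  also have "\<dots> \<le> (knorm K * l2norm h) * (knorm K * l2norm f)"
    by (intro mult_mono l2norm_kapply_le_knorm K f h l2norm_nonneg mult_nonneg_nonneg knorm_nonneg)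
  also have "\<dots> = (knorm K)^2 * l2norm f * l2norm h" by (simp add: power2_eq_square)
  finally show "cmod (fin_inner h (kapply (psum (Tseq K) (Tseq K) m) f)) \<le> \<dots>" .
qed

lemma sum_l2norm_sq_le_psum:
  assumes a: "\<And>n. bounded_kernel (a n)" and C: "knorm (psum a a m) \<le> C" and f: "fin_supp f"
  shows "(\<Sum>n<m. (l2norm (kapply (a n) f))^2) \<le> C * (l2norm f)^2"
proof -
  let ?S = "psum a a m"
  have S: "bounded_kernel ?S" by (rule bounded_psum[OF a])
  have "fin_inner f (kapply ?S f) = (\<Sum>n<m. infsum (\<lambda>w. cnj (kapply (a n) f w) * kapply (a n) f w) UNIV)"
    by (rule fin_inner_psum[OF a a f f])
  also have "\<dots> = (\<Sum>n<m. complex_of_real (infsum (sqmod (kapply (a n) f)) UNIV))"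
    by (rule sum.cong[OF refl])
      (simp only: cnj_mult_self infsum_of_real[OF summable_sqmod_kapply[OF a f]])
  also have "\<dots> = complex_of_real (\<Sum>n<m. (l2norm (kapply (a n) f))^2)"
    by (simp add: l2norm_sq)
  finally have inner: "fin_inner f (kapply ?S f) = complex_of_real (\<Sum>n<m. (l2norm (kapply (a n) f))^2)" .
  have "(\<Sum>n<m. (l2norm (kapply (a n) f))^2) = cmod (fin_inner f (kapply ?S f))"
    unfolding inner norm_of_real by (simp add: sum_nonneg)
  also have "\<dots> \<le> l2norm f * l2norm (kapply ?S f)"
    by (rule fin_inner_le[OF f summable_sqmod_kapply[OF S f]])
  also have "\<dots> \<le> l2norm f * (C * l2norm f)"
    using C l2norm_kapply_le_knorm[OF S f]
    by (intro mult_left_mono l2norm_nonneg) (meson l2norm_nonneg mult_right_mono order_trans)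
  also have "\<dots> = C * (l2norm f)^2" by (simp add: power2_eq_square)
  finally show ?thesis .
qed

definition stack :: "(nat \<Rightarrow> ('a, 'a) kernel) \<Rightarrow> ('a \<times> nat, 'a) kernel" where
  "stack a = (\<lambda>(y, n) x. a n y x)"

lemma Tseq_stack: "Tseq (stack a) = a"
  unfolding Tseq_def stack_def by simp

lemma bounded_stack:
  assumes a: "\<And>n. bounded_kernel (a n)" and C: "\<And>m. knorm (psum a a m) \<le> C"
  shows "bounded_kernel (stack a)"
  unfolding bounded_kernel_def
proof (intro exI[of _ "sqrt C"] allI impI conjI)
  have C0: "C \<ge> 0" using knorm_nonneg[OF bounded_psum[of 0 a, OF a]] C[of 0] by linarith
  fix f :: "'a \<Rightarrow> complex" assume f: "fin_supp f"
  let ?g = "sqmod (kapply (stack a) f)"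
  have g: "?g (y, n) = sqmod (kapply (a n) f) y" for y n unfolding kapply_def stack_def by simp
  have "sum ?g G \<le> C * (l2norm f)^2" if G: "finite G" for G
  proof -
    define m where "m = Suc (Max (insert 0 (snd ` G)))"
    have "G \<subseteq> fst ` G \<times> {..<m}"
    proof
      fix p assume p: "p \<in> G"
      then have "snd p < m" using G unfolding m_def by (simp add: le_imp_less_Suc)
      then show "p \<in> fst ` G \<times> {..<m}" using p by (cases p) force
    qed
    then have "sum ?g G \<le> sum ?g (fst ` G \<times> {..<m})"
      using G by (intro sum_mono2) auto
    also have "\<dots> = (\<Sum>y\<in>fst ` G. \<Sum>n<m. ?g (y, n))"
      by (simp only: sum.cartesian_product case_prod_beta' prod.collapse)
    also have "\<dots> = (\<Sum>n<m. \<Sum>y\<in>fst ` G. sqmod (kapply (a n) f) y)"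
      unfolding g by (rule sum.swap)
    also have "\<dots> \<le> (\<Sum>n<m. (l2norm (kapply (a n) f))^2)"
      unfolding l2norm_sq using G
      by (intro sum_mono finite_sum_le_infsum summable_sqmod_kapply[OF a f]) auto
    also have "\<dots> \<le> C * (l2norm f)^2" by (rule sum_l2norm_sq_le_psum[OF a C f])
    finally show ?thesis .
  qed
  then have "?g summable_on UNIV" and bound: "infsum ?g UNIV \<le> C * (l2norm f)^2"
    by (auto intro!: nonneg_summable_infsum_le)
  then show "?g summable_on UNIV" by simp
  have "l2norm (kapply (stack a) f) \<le> sqrt (C * (l2norm f)^2)"
    using real_sqrt_le_mono[OF bound] by (simp only: l2norm_def)
  also have "\<dots> = sqrt C * l2norm f" using C0 by (simp add: real_sqrt_mult l2norm_nonneg)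
  finally show "l2norm (kapply (stack a) f) \<le> sqrt C * l2norm f" .
qed

lemma Tseq_image_bounded_kernels:
  "Tseq ` {K. bounded_kernel K} = ell2_dual (bounded_ops :: ('a, 'a) kernel set)"
proof
  show "Tseq ` {K. bounded_kernel K} \<subseteq> ell2_dual bounded_ops"
    unfolding ell2_dual_def bounded_ops_def using Tseq_bounded knorm_psum_Tseq by blast
  show "ell2_dual bounded_ops \<subseteq> Tseq ` {K :: ('a \<times> nat, 'a) kernel. bounded_kernel K}"
  proof
    fix a :: "nat \<Rightarrow> ('a, 'a) kernel" assume "a \<in> ell2_dual bounded_ops"
    then obtain C where "\<And>n. bounded_kernel (a n)" "\<And>m. knorm (psum a a m) \<le> C"
      unfolding ell2_dual_def bounded_ops_def by blast
    then have "bounded_kernel (stack a)" by (rule bounded_stack)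
    then show "a \<in> Tseq ` {K. bounded_kernel K}" using Tseq_stack[of a] by force
  qed
qed

subsection \<open>Bounded spaces: every kernel has finite propagation\<close>

lemma uniform_roeI: "bounded_kernel k \<Longrightarrow> finite_prop k \<Longrightarrow> k \<in> uniform_roe"
  unfolding uniform_roe_def using knorm_kdiff_self_le by (fastforce intro: le_less_trans)

lemma M_XNI: "bounded_kernel k \<Longrightarrow> finite_prop_M k \<Longrightarrow> k \<in> M_XN"
  unfolding M_XN_def using knorm_kdiff_self_le by (fastforce intro: le_less_trans)

lemma M_XN_bounded_space:
  assumes "bounded (UNIV::'a::metric_space set)"
  shows "(M_XN :: ('a \<times> nat, 'a) kernel set) = {K. bounded_kernel K}"
proof -
  obtain e where e: "\<And>x y::'a. dist x y \<le> e" using assms unfolding bounded_two_points by blast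
  have "finite_prop_M K" for K :: "('a \<times> nat, 'a) kernel"
    unfolding finite_prop_M_def d0_def by (rule exI[of _ "e + 2"]) (smt (verit) e)
  then show ?thesis using M_XNI unfolding M_XN_def by blast
qed

lemma uniform_roe_bounded_space:
  assumes "bounded (UNIV::'a::metric_space set)"
  shows "(uniform_roe :: ('a, 'a) kernel set) = bounded_ops"
proof -
  obtain e where e: "\<And>x y::'a. dist x y \<le> e" using assms unfolding bounded_two_points by blast
  have "finite_prop K" for K :: "('a, 'a) kernel"
    unfolding finite_prop_def by (rule exI[of _ "e + 1"]) (smt (verit) e)
  then show ?thesis using uniform_roeI unfolding uniform_roe_def bounded_ops_def by blast
qed

subsection \<open>Unbounded spaces: a diagonal operator outside the bidual\<close>

definition graph_kernel :: "'a set \<Rightarrow> ('a \<Rightarrow> 'b) \<Rightarrow> ('b, 'a) kernel" where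
  "graph_kernel D g = (\<lambda>y x. if x \<in> D \<and> y = g x then 1 else 0)"

lemma kapply_graph_kernel_image:
  assumes "inj_on g D" "x \<in> D" "fin_supp f"
  shows "kapply (graph_kernel D g) f (g x) = f x"
proof -
  have "kapply (graph_kernel D g) f (g x) = (\<Sum>x'\<in>{x. f x \<noteq> 0}. if x' = x then f x' else 0)"
    unfolding kapply_def graph_kernel_def
    by (rule sum.cong) (use assms(1,2) in \<open>auto simp: inj_on_def\<close>)
  also have "\<dots> = f x" using assms(3) unfolding fin_supp_def by (simp add: sum.delta')
  finally show ?thesis .
qed

lemma kapply_graph_kernel_outside:
  assumes "y \<notin> g ` D"
  shows "kapply (graph_kernel D g) f y = 0"
  unfolding kapply_def graph_kernel_def using assms by (auto intro!: sum.neutral)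

lemma graph_kernel_bound:
  assumes g: "inj_on g D" and f: "fin_supp f"
  shows "sqmod (kapply (graph_kernel D g) f) summable_on UNIV"
    and "l2norm (kapply (graph_kernel D g) f) \<le> l2norm f"
proof -
  let ?F = "{x. f x \<noteq> 0}" and ?u = "sqmod (kapply (graph_kernel D g) f)"
  have F: "finite ?F" using f unfolding fin_supp_def .
  have zero: "?u y = 0" if "y \<notin> g ` (D \<inter> ?F)" for y
  proof (cases "y \<in> g ` D")
    case True
    then obtain x where "x \<in> D" "y = g x" by auto
    then show ?thesis using that kapply_graph_kernel_image[OF g _ f] by auto
  qed (simp add: kapply_graph_kernel_outside)
  have fin: "finite (g ` (D \<inter> ?F))" using F by simp
  moreover have "{y \<in> UNIV. ?u y \<noteq> 0} \<subseteq> g ` (D \<inter> ?F)" using zero by blast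
  ultimately show "?u summable_on UNIV"
    by (intro finite_nonzero_values_imp_summable_on) (rule finite_subset)
  have "infsum ?u UNIV = (\<Sum>y\<in>g ` (D \<inter> ?F). ?u y)"
    by (rule infsum_UNIV_finite_support[OF fin zero])
  also have "\<dots> = (\<Sum>x\<in>D \<inter> ?F. ?u (g x))"
    by (rule sum.reindex[unfolded comp_def]) (rule inj_on_subset[OF g], blast)
  also have "\<dots> = (\<Sum>x\<in>D \<inter> ?F. (cmod (f x))^2)"
    by (rule sum.cong) (simp_all add: kapply_graph_kernel_image[OF g _ f])
  also have "\<dots> \<le> (\<Sum>x\<in>?F. (cmod (f x))^2)" by (rule sum_mono2) (use F in auto)
  also have "\<dots> = infsum (sqmod f) UNIV"
    by (rule infsum_UNIV_finite_support[symmetric, OF F]) auto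
  finally show "l2norm (kapply (graph_kernel D g) f) \<le> l2norm f"
    unfolding l2norm_def by simp
qed

lemma bounded_graph_kernel: "inj_on g D \<Longrightarrow> bounded_kernel (graph_kernel D g)"
  unfolding bounded_kernel_def by (rule exI[of _ 1]) (simp add: graph_kernel_bound)

lemma knorm_graph_kernel_le: "inj_on g D \<Longrightarrow> knorm (graph_kernel D g) \<le> 1"
  by (rule knorm_least) (meson graph_kernel_bound order_trans)

definition matrix_unit :: "'b \<Rightarrow> 'a \<Rightarrow> ('b, 'a) kernel" where
  "matrix_unit u v = (\<lambda>y x. if y = u \<and> x = v then 1 else 0)"

lemma matrix_unit_eq_graph_kernel: "matrix_unit u v = graph_kernel {v} (\<lambda>_. u)"
  unfolding matrix_unit_def graph_kernel_def by (auto intro!: ext)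

lemma bounded_matrix_unit: "bounded_kernel (matrix_unit u v)"
  unfolding matrix_unit_eq_graph_kernel by (rule bounded_graph_kernel) simp

lemma matrix_unit_in_uniform_roe: "matrix_unit u v \<in> uniform_roe"
proof -
  have "finite_prop (matrix_unit u v)"
    unfolding finite_prop_def matrix_unit_def by (rule exI[of _ "dist u v + 1"]) auto
  then show ?thesis by (rule uniform_roeI[OF bounded_matrix_unit])
qed

lemma zero_in_uniform_roe: "(\<lambda>_ _. 0) \<in> uniform_roe"
proof -
  have "bounded_kernel (\<lambda>(_::'a) (_::'a). 0::complex)"
    unfolding bounded_kernel_def by (rule exI[of _ 0]) (simp add: kapply_def l2norm_def)
  moreover have "finite_prop (\<lambda>(_::'a) (_::'a). 0::complex)" unfolding finite_prop_def by simp
  ultimately show ?thesis by (rule uniform_roeI)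
qed

lemma kadj_matrix_unit: "kadj (matrix_unit u v) = matrix_unit v u"
  unfolding kadj_def matrix_unit_def by (auto intro!: ext)

lemma kmult_matrix_unit_right: "kmult k (matrix_unit u v) = (\<lambda>y x. if x = v then k y u else 0)"
proof (intro ext)
  fix y x
  have "infsum (\<lambda>w. k y w * matrix_unit u v w x) UNIV = (\<Sum>w\<in>{u}. k y w * matrix_unit u v w x)"
    by (rule infsum_UNIV_finite_support) (auto simp: matrix_unit_def)
  then show "kmult k (matrix_unit u v) y x = (if x = v then k y u else 0)"
    unfolding kmult_def by (simp add: matrix_unit_def)
qed

lemma kmult_matrix_units:
  "kmult (matrix_unit a b) (matrix_unit u v) = (if b = u then matrix_unit a v else (\<lambda>_ _. 0))"
  unfolding kmult_matrix_unit_right by (auto simp: matrix_unit_def intro!: ext)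

lemma psum_matrix_units:
  assumes z: "inj z"
  shows "psum (\<lambda>n. matrix_unit (x n) (z n)) (\<lambda>n. matrix_unit (x n) (z n)) m = graph_kernel (z ` {..<m}) id"
proof (intro ext)
  fix u v
  have "psum (\<lambda>n. matrix_unit (x n) (z n)) (\<lambda>n. matrix_unit (x n) (z n)) m u v
      = (\<Sum>n<m. if u = z n \<and> v = z n then 1 else 0)"
    unfolding psum_def kadj_matrix_unit kmult_matrix_units by (simp add: matrix_unit_def)
  also have "\<dots> = graph_kernel (z ` {..<m}) id u v"
  proof (cases "u = v \<and> v \<in> z ` {..<m}")
    case True
    then obtain j where j: "j < m" "u = z j" "v = z j" by auto
    then have "(\<Sum>n<m. if u = z n \<and> v = z n then 1 else 0) = (\<Sum>n<m. if n = j then 1 else (0::complex))"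
      using z by (intro sum.cong) (auto simp: inj_eq)
    then show ?thesis using True j by (simp add: graph_kernel_def)
  next
    case False
    then show ?thesis by (auto simp: graph_kernel_def intro!: sum.neutral)
  qed
  finally show "psum (\<lambda>n. matrix_unit (x n) (z n)) (\<lambda>n. matrix_unit (x n) (z n)) m u v
      = graph_kernel (z ` {..<m}) id u v" .
qed

lemma matrix_units_in_ell2_dual:
  assumes "inj z"
  shows "(\<lambda>n. matrix_unit (x n) (z n)) \<in> ell2_dual uniform_roe"
proof -
  have "knorm (psum (\<lambda>n. matrix_unit (x n) (z n)) (\<lambda>n. matrix_unit (x n) (z n)) m) \<le> 1" for m
    unfolding psum_matrix_units[OF assms] by (rule knorm_graph_kernel_le) simp
  then show ?thesis unfolding ell2_dual_def using matrix_unit_in_uniform_roe by blast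
qed

lemma uniform_roe_far_entries_small:
  assumes k: "k \<in> uniform_roe" and e: "e > 0"
  obtains L where "\<And>x y. L \<le> dist x y \<Longrightarrow> cmod (k x y) < e"
proof -
  obtain s where s: "bounded_kernel s" "finite_prop s" "knorm (kdiff k s) < e"
    using k e unfolding uniform_roe_def by blast
  obtain L where L: "\<And>x y. L \<le> dist x y \<Longrightarrow> s x y = 0"
    using s(2) unfolding finite_prop_def by blast
  have "cmod (k x y) < e" if "L \<le> dist x y" for x y
  proof -
    have "cmod (k x y) = cmod (kdiff k s x y)" using L[OF that] by (simp add: kdiff_def)
    also have "\<dots> \<le> knorm (kdiff k s)"
      using k s(1) by (intro cmod_entry_le_knorm bounded_kdiff) (auto simp: uniform_roe_def)
    finally show ?thesis using s(3) by linarith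
  qed
  then show ?thesis by (rule that)
qed

lemma unbounded_far_sequences:
  assumes "\<not> bounded (UNIV::'a set)"
  obtains x z :: "nat \<Rightarrow> 'a::metric_space" where "inj x" "inj z" "\<And>n. real n \<le> dist (x n) (z n)"
proof -
  fix a :: 'a
  have far: "\<exists>y. r < dist a y" for r
    using assms by (simp add: bounded_any_center[of UNIV a] not_le)
  define p where "p = rec_nat a (\<lambda>n q. SOME y. dist a q + real (Suc n) < dist a y)"
  have "p (Suc n) = (SOME y. dist a (p n) + real (Suc n) < dist a y)" for n
    unfolding p_def by simp
  then have step: "dist a (p n) + real (Suc n) < dist a (p (Suc n))" for n
    using someI_ex[OF far[of "dist a (p n) + real (Suc n)"]] by simp
  have "strict_mono (\<lambda>n. dist a (p n))"
  proof (rule strict_monoI_Suc)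
    show "dist a (p n) < dist a (p (Suc n))" for n using step[of n] by linarith
  qed
  then have "inj p" by (intro injI) (metis strict_mono_eq)
  then have "inj (\<lambda>n. p (2 * n))" "inj (\<lambda>n. p (Suc (2 * n)))"
    by (auto intro!: injI dest: injD)
  moreover have "real n \<le> dist (p (2 * n)) (p (Suc (2 * n)))" for n
    using step[of "2 * n"] dist_triangle[of a "p (Suc (2 * n))" "p (2 * n)"]
      of_nat_le_iff[of n "Suc (2 * n)"] by linarith
  ultimately show ?thesis by (rule that[of "\<lambda>n. p (2 * n)" "\<lambda>n. p (Suc (2 * n))"])
qed

lemma stack_matrix_units_in_M_XN:
  assumes x: "inj x"
  shows "stack (\<lambda>n. matrix_unit (x n) (x n)) \<in> M_XN"
proof -
  let ?T = "stack (\<lambda>n. matrix_unit (x n) (x n))"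
  obtain C where "\<And>m. knorm (psum (\<lambda>n. matrix_unit (x n) (x n)) (\<lambda>n. matrix_unit (x n) (x n)) m) \<le> C"
    using matrix_units_in_ell2_dual[OF x, of x] unfolding ell2_dual_def by blast
  then have "bounded_kernel ?T" by (rule bounded_stack[OF bounded_matrix_unit])
  moreover have "finite_prop_M ?T"
    unfolding finite_prop_M_def by (rule exI[of _ 2]) (auto simp: stack_def matrix_unit_def d0_def)
  ultimately show ?thesis by (rule M_XNI)
qed

text \<open>Right multiplication by the matrix unit at \<open>(z\<^sub>k, z\<^sub>k)\<close> cuts the sequence of matrix
  units at \<open>(x\<^sub>n, z\<^sub>n)\<close> down to its \<open>k\<close>-th term, which lies in \<open>\<ell>\<^sub>2(A)\<close>; there \<open>\<phi>\<close> is
  determined by the diagonal sequence, and module linearity carries the resulting entry back.\<close>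
lemma bidual_functional_entry:
  fixes x z :: "nat \<Rightarrow> 'a::metric_space" and \<phi> :: "(nat \<Rightarrow> ('a, 'a) kernel) \<Rightarrow> ('a, 'a) kernel"
  assumes z: "inj z"
    and mult: "\<And>t. t \<in> uniform_roe \<Longrightarrow>
      \<phi> (\<lambda>n. kmult (matrix_unit (x n) (z n)) t) = kmult (\<phi> (\<lambda>n. matrix_unit (x n) (z n))) t"
    and conv: "\<And>c. c \<in> ell2_mod uniform_roe \<Longrightarrow> pair_conv (\<lambda>n. matrix_unit (x n) (x n)) c (\<phi> c)"
  shows "\<phi> (\<lambda>n. matrix_unit (x n) (z n)) (x k) (z k) = 1"
proof -
  let ?E = "matrix_unit (x k) (z k)" and ?P = "matrix_unit (z k) (z k)"
  define c where "c n = (if n = k then ?E else (\<lambda>_ _. 0))" for n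
  have cut: "(\<lambda>n. kmult (matrix_unit (x n) (z n)) ?P) = c"
    unfolding c_def kmult_matrix_units inj_eq[OF z] by (intro ext) simp
  have "eventually (\<lambda>m. psum c c m = ?P) sequentially"
    unfolding c_def eventually_sequentially
    by (intro exI[of _ "Suc k"]) (simp add: psum_single kadj_matrix_unit kmult_matrix_units)
  then have "pair_conv c c ?P" by (rule pair_conv_eventually_eq[OF bounded_matrix_unit])
  moreover have "c n \<in> uniform_roe" for n
    unfolding c_def by (simp add: matrix_unit_in_uniform_roe zero_in_uniform_roe)
  ultimately have c: "c \<in> ell2_mod uniform_roe" unfolding ell2_mod_def by blast
  have "eventually (\<lambda>m. psum (\<lambda>n. matrix_unit (x n) (x n)) c m = ?E) sequentially"
    unfolding c_def eventually_sequentially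
    by (intro exI[of _ "Suc k"]) (simp add: psum_single kadj_matrix_unit kmult_matrix_units)
  then have "\<phi> c = ?E" by (rule pair_conv_unique[OF conv[OF c] bounded_matrix_unit])
  moreover have "\<phi> c = kmult (\<phi> (\<lambda>n. matrix_unit (x n) (z n))) ?P"
    using mult[OF matrix_unit_in_uniform_roe[of "z k" "z k"]] unfolding cut .
  ultimately have "kmult (\<phi> (\<lambda>n. matrix_unit (x n) (z n))) ?P (x k) (z k) = ?E (x k) (z k)" by simp
  then show ?thesis unfolding kmult_matrix_unit_right by (simp add: matrix_unit_def)
qed

lemma matrix_units_not_in_ell2_bidual:
  assumes x: "inj x" and z: "inj z" and far: "\<And>n. real n \<le> dist (x n) (z n)"
  shows "(\<lambda>n. matrix_unit (x n) (x n)) \<notin> ell2_bidual uniform_roe"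
proof
  let ?b = "\<lambda>n. matrix_unit (x n) (z n)"
  assume "(\<lambda>n. matrix_unit (x n) (x n)) \<in> ell2_bidual uniform_roe"
  then obtain \<phi> where
    in_A: "\<And>b. b \<in> ell2_dual uniform_roe \<Longrightarrow> \<phi> b \<in> uniform_roe" and
    module: "\<And>b t. b \<in> ell2_dual uniform_roe \<Longrightarrow> t \<in> uniform_roe \<Longrightarrow>
      \<phi> (\<lambda>n. kmult (b n) t) = kmult (\<phi> b) t" and
    conv: "\<And>c. c \<in> ell2_mod uniform_roe \<Longrightarrow> pair_conv (\<lambda>n. matrix_unit (x n) (x n)) c (\<phi> c)"
    unfolding ell2_bidual_def by blast
  have b: "?b \<in> ell2_dual uniform_roe" by (rule matrix_units_in_ell2_dual[OF z])
  have roe: "\<phi> ?b \<in> uniform_roe" by (rule in_A[OF b])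
  have entry: "\<phi> ?b (x k) (z k) = 1" for k
    by (rule bidual_functional_entry[OF z module[OF b] conv])
  obtain L where L: "\<And>u v. L \<le> dist u v \<Longrightarrow> cmod (\<phi> ?b u v) < 1"
    using uniform_roe_far_entries_small[OF roe, of 1] by auto
  have "L \<le> dist (x (nat \<lceil>L\<rceil>)) (z (nat \<lceil>L\<rceil>))" using far[of "nat \<lceil>L\<rceil>"] by linarith
  then show False using L entry by fastforce
qed

theorem mainTheorem10:
  assumes discrete: "\<And>x::'a::{metric_space, countable}. open {x}"
  shows "(bounded (UNIV::'a set) \<longrightarrow>
            Tseq ` (M_XN :: ('a \<times> nat, 'a) kernel set) = ell2_dual (bounded_ops :: ('a,'a) kernel set) \<and>
            Tseq ` (M_XN :: ('a \<times> nat, 'a) kernel set) = ell2_dual (uniform_roe :: ('a,'a) kernel set))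
       \<and> (\<not> bounded (UNIV::'a set) \<longrightarrow>
            (\<exists>k \<in> (M_XN :: ('a \<times> nat, 'a) kernel set). Tseq k \<notin> ell2_bidual (uniform_roe :: ('a,'a) kernel set)))"
proof (intro conjI impI)
  assume bounded: "bounded (UNIV::'a set)"
  show "Tseq ` (M_XN :: ('a \<times> nat, 'a) kernel set) = ell2_dual (bounded_ops :: ('a,'a) kernel set)"
    unfolding M_XN_bounded_space[OF bounded] by (rule Tseq_image_bounded_kernels)
  then show "Tseq ` (M_XN :: ('a \<times> nat, 'a) kernel set) = ell2_dual (uniform_roe :: ('a,'a) kernel set)"
    unfolding uniform_roe_bounded_space[OF bounded] .
next
  assume "\<not> bounded (UNIV::'a set)"
  then obtain x z :: "nat \<Rightarrow> 'a" where x: "inj x" and z: "inj z"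
    and far: "\<And>n. real n \<le> dist (x n) (z n)"
    using unbounded_far_sequences by blast
  have "stack (\<lambda>n. matrix_unit (x n) (x n)) \<in> M_XN" by (rule stack_matrix_units_in_M_XN[OF x])
  moreover have "Tseq (stack (\<lambda>n. matrix_unit (x n) (x n))) \<notin> ell2_bidual uniform_roe"
    unfolding Tseq_stack by (rule matrix_units_not_in_ell2_bidual[OF x z far])
  ultimately show "\<exists>k \<in> (M_XN :: ('a \<times> nat, 'a) kernel set). Tseq k \<notin> ell2_bidual (uniform_roe :: ('a,'a) kernel set)"
    by blast
qed
end
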